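(* Let $\rho$ be a function quasi-norm over a $\sigma$-finite measure space $(\Omega,\Sigma,\mu)$, let $X$ be a quasi-Banach space, and let $(x_n)_{n=1}^\infty$ be a sequence of measurable functions $\Omega\to X$ such that $\lim_n\rho(\|x_n(\cdot)-x(\cdot)\|)=0$ for some measurable $x\colon\Omega\to X$. Then there is a subsequence $(y_n)_{n=1}^\infty$ of $(x_n)_{n=1}^\infty$ with $\lim_ny_n=x$ a.e.
   Context: $L_0^+(\mu)$: measurable functions $\Omega\to[0,\infty]$ modulo a.e. equality; $\Sigma(\mu)=\{E\in\Sigma:\mu(E)<\infty\}$. A function quasi-norm over $(\Omega,\Sigma,\mu)$ is $\rho\colon L_0^+(\mu)\to[0,\infty]$ with (F1) $\rho(tf)=t\rho(f)$ for $t\ge0$; (F2) $f\le g$ a.e. $\Rightarrow\rho(f)\le\rho(g)$; (F3) $\rho(\chi_E)<\infty$ for $E\in\Sigma(\mu)$; (F4) for all $E\in\Sigma(\mu)$, $\varepsilon>0$ there is $\delta>0$ such that $\mu(A)\le\varepsilon$ whenever $A\in\Sigma$, $A\subseteq E$, $\rho(\chi_A)\le\delta$; (F5) there is $\kappa$ with $\rho(f+g)\le\kappa(\rho(f)+\rho(g))$. *)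

theory Defs
  imports "HOL-Analysis.Analysis"
begin

definition quasi_norm :: "('b::real_vector \<Rightarrow> real) \<Rightarrow> bool" where
  "quasi_norm q \<longleftrightarrow>
     (\<forall>x. 0 \<le> q x) \<and> (\<forall>x. q x = 0 \<longleftrightarrow> x = 0) \<and>
     (\<forall>c x. q (c *\<^sub>R x) = \<bar>c\<bar> * q x) \<and>
     (\<exists>C. \<forall>x y. q (x + y) \<le> C * (q x + q y))"

definition quasi_banach :: "('b::real_vector \<Rightarrow> real) \<Rightarrow> bool" where
  "quasi_banach q \<longleftrightarrow> quasi_norm q \<and>
     (\<forall>s::nat \<Rightarrow> 'b. (\<forall>e>0. \<exists>N. \<forall>m\<ge>N. \<forall>n\<ge>N. q (s m - s n) < e) \<longrightarrow>
         (\<exists>l. (\<lambda>n. q (s n - l)) \<longlonglongrightarrow> 0))"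

definition qopen :: "('b::real_vector \<Rightarrow> real) \<Rightarrow> 'b set \<Rightarrow> bool" where
  "qopen q U \<longleftrightarrow> (\<forall>x\<in>U. \<exists>e>0. \<forall>y. q (y - x) < e \<longrightarrow> y \<in> U)"

definition qborel :: "('b::real_vector \<Rightarrow> real) \<Rightarrow> 'b measure" where
  "qborel q = sigma UNIV (Collect (qopen q))"

text \<open>Function quasi-norm (F1)--(F5); rho acts on nonnegative measurable functions,
  axioms are only imposed on measurable functions (elements of L_0^+).\<close>
definition function_quasi_norm :: "'a measure \<Rightarrow> (('a \<Rightarrow> ennreal) \<Rightarrow> ennreal) \<Rightarrow> bool" where
  "function_quasi_norm M \<rho> \<longleftrightarrow>
     (\<forall>f\<in>borel_measurable M. \<forall>t::real. 0 \<le> t \<longrightarrow> \<rho> (\<lambda>\<omega>. ennreal t * f \<omega>) = ennreal t * \<rho> f) \<and>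
     (\<forall>f\<in>borel_measurable M. \<forall>g\<in>borel_measurable M.
        (AE \<omega> in M. f \<omega> \<le> g \<omega>) \<longrightarrow> \<rho> f \<le> \<rho> g) \<and>
     (\<forall>E\<in>sets M. emeasure M E < \<infinity> \<longrightarrow> \<rho> (indicator E) < \<infinity>) \<and>
     (\<forall>E\<in>sets M. emeasure M E < \<infinity> \<longrightarrow> (\<forall>\<epsilon>::real. \<epsilon> > 0 \<longrightarrow> (\<exists>\<delta>::real. \<delta> > 0 \<and>
        (\<forall>A\<in>sets M. A \<subseteq> E \<longrightarrow> \<rho> (indicator A) \<le> ennreal \<delta> \<longrightarrow> emeasure M A \<le> ennreal \<epsilon>)))) \<and>
     (\<exists>\<kappa>::real. \<forall>f\<in>borel_measurable M. \<forall>g\<in>borel_measurable M.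
        \<rho> (\<lambda>\<omega>. f \<omega> + g \<omega>) \<le> ennreal \<kappa> * (\<rho> f + \<rho> g))"

end

theory Submission
  imports Defs
begin

text \<open>Of the hypotheses only (F1), (F2), (F4) and \<open>q \<ge> 0\<close> are needed: (F1) and (F2) give
  a Chebyshev inequality for \<open>\<rho>\<close>, and (F4) turns it into convergence in measure on every set of
  finite measure. The usual Riesz argument then applies: on the \<open>k\<close>-th set of a \<open>\<sigma>\<close>-finite
  exhaustion pick an index \<open>r k\<close> beyond which \<open>{2^-k \<le> \<parallel>x\<^sub>n - x\<parallel>}\<close> has measure at most \<open>2^-k\<close>;
  by Borel--Cantelli almost every point eventually lies outside these sets, so
  \<open>\<parallel>x\<^bsub>r k\<^esub> - x\<parallel> < 2^-k\<close> for large \<open>k\<close>.\<close>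

lemma function_quasi_norm_homogeneous:
  assumes "function_quasi_norm M \<rho>" "f \<in> borel_measurable M" "0 \<le> t"
  shows "\<rho> (\<lambda>\<omega>. ennreal t * f \<omega>) = ennreal t * \<rho> f"
  using assms unfolding function_quasi_norm_def by simp

lemma function_quasi_norm_mono:
  assumes "function_quasi_norm M \<rho>" "f \<in> borel_measurable M" "g \<in> borel_measurable M"
    and "AE \<omega> in M. f \<omega> \<le> g \<omega>"
  shows "\<rho> f \<le> \<rho> g"
  using assms unfolding function_quasi_norm_def by simp

lemma function_quasi_norm_absolutely_continuous:
  assumes "function_quasi_norm M \<rho>" "E \<in> sets M" "emeasure M E < \<infinity>" "0 < \<epsilon>"
  obtains \<delta> :: real where "0 < \<delta>"
    and "\<And>A. A \<in> sets M \<Longrightarrow> A \<subseteq> E \<Longrightarrow> \<rho> (indicator A) \<le> ennreal \<delta> \<Longrightarrow> emeasure M A \<le> ennreal \<epsilon>"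
proof -
  have "\<forall>E\<in>sets M. emeasure M E < \<infinity> \<longrightarrow> (\<forall>\<epsilon>::real. \<epsilon> > 0 \<longrightarrow> (\<exists>\<delta>::real. \<delta> > 0 \<and>
      (\<forall>A\<in>sets M. A \<subseteq> E \<longrightarrow> \<rho> (indicator A) \<le> ennreal \<delta> \<longrightarrow> emeasure M A \<le> ennreal \<epsilon>)))"
    using assms(1) unfolding function_quasi_norm_def by (elim conjE) assumption
  then show ?thesis
    using assms(2-4) that by blast
qed

lemma function_quasi_norm_chebyshev:
  assumes "function_quasi_norm M \<rho>" "f \<in> borel_measurable M" "A \<in> sets M" "0 \<le> t"
    and "\<And>\<omega>. \<omega> \<in> A \<Longrightarrow> ennreal t \<le> f \<omega>"
  shows "ennreal t * \<rho> (indicator A) \<le> \<rho> f"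
proof -
  have "ennreal t * \<rho> (indicator A) = \<rho> (\<lambda>\<omega>. ennreal t * indicator A \<omega>)"
    using assms by (simp add: function_quasi_norm_homogeneous)
  also have "\<dots> \<le> \<rho> f"
  proof (rule function_quasi_norm_mono[OF assms(1) _ assms(2)])
    show "(\<lambda>\<omega>. ennreal t * indicator A \<omega>) \<in> borel_measurable M"
      using assms(3) by measurable
    show "AE \<omega> in M. ennreal t * indicator A \<omega> \<le> f \<omega>"
      using assms(5) by (intro AE_I2) (simp add: indicator_def)
  qed
  finally show ?thesis .
qed

lemma tendsto_zero_ennrealI:
  fixes u :: "'a \<Rightarrow> ennreal"
  assumes "\<And>\<epsilon>. 0 < \<epsilon> \<Longrightarrow> eventually (\<lambda>n. u n \<le> ennreal \<epsilon>) F"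
  shows "(u \<longlongrightarrow> 0) F"
proof (rule order_tendstoI)
  fix a :: ennreal assume "0 < a"
  then obtain b where "0 < b" "b < a"
    using dense by blast
  have "b < top"
    using \<open>b < a\<close> top_greatest by (rule less_le_trans)
  then have "0 < enn2real b" "ennreal (enn2real b) = b"
    using \<open>0 < b\<close> by (simp_all add: enn2real_positive_iff)
  then show "eventually (\<lambda>n. u n < a) F"
    using assms[of "enn2real b"] \<open>b < a\<close> by (auto elim: eventually_mono)
qed simp

lemma function_quasi_norm_tendsto_in_measure:
  assumes "function_quasi_norm M \<rho>" "\<And>n. f n \<in> borel_measurable M"
    and "(\<lambda>n. \<rho> (f n)) \<longlonglongrightarrow> 0"
    and "E \<in> sets M" "emeasure M E < \<infinity>" "0 < t"
  shows "(\<lambda>n. emeasure M ({\<omega> \<in> space M. ennreal t \<le> f n \<omega>} \<inter> E)) \<longlonglongrightarrow> 0"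
proof (rule tendsto_zero_ennrealI)
  fix \<epsilon> :: real assume "0 < \<epsilon>"
  then obtain \<delta> where "0 < \<delta>" and \<delta>:
    "\<And>A. A \<in> sets M \<Longrightarrow> A \<subseteq> E \<Longrightarrow> \<rho> (indicator A) \<le> ennreal \<delta> \<Longrightarrow> emeasure M A \<le> ennreal \<epsilon>"
    using function_quasi_norm_absolutely_continuous[OF assms(1,4,5)] by blast
  have "eventually (\<lambda>n. \<rho> (f n) < ennreal (t * \<delta>)) sequentially"
    using order_tendstoD(2)[OF assms(3)] \<open>0 < t\<close> \<open>0 < \<delta>\<close> by simp
  then show "eventually (\<lambda>n. emeasure M ({\<omega> \<in> space M. ennreal t \<le> f n \<omega>} \<inter> E) \<le> ennreal \<epsilon>) sequentially"
  proof eventually_elim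
    case (elim n)
    define A where "A = {\<omega> \<in> space M. ennreal t \<le> f n \<omega>} \<inter> E"
    have A: "A \<in> sets M"
      using assms(2,4) unfolding A_def by measurable
    have "ennreal t * \<rho> (indicator A) \<le> \<rho> (f n)"
      using function_quasi_norm_chebyshev[OF assms(1,2) A] \<open>0 < t\<close> unfolding A_def by auto
    also have "\<dots> < ennreal t * ennreal \<delta>"
      using elim \<open>0 < t\<close> \<open>0 < \<delta>\<close> by (simp add: ennreal_mult)
    finally have less: "ennreal t * \<rho> (indicator A) < ennreal t * ennreal \<delta>" .
    have "\<rho> (indicator A) \<le> ennreal \<delta>"
    proof (rule ccontr)
      assume "\<not> ?thesis"
      then have "ennreal t * ennreal \<delta> \<le> ennreal t * \<rho> (indicator A)"
        by (intro mult_left_mono) auto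
      with less show False
        by simp
    qed
    moreover have "A \<subseteq> E"
      unfolding A_def by blast
    ultimately have "emeasure M A \<le> ennreal \<epsilon>"
      using \<delta>[OF A] by blast
    then show ?case
      unfolding A_def .
  qed
qed

lemma strict_mono_dominating: "\<exists>r :: nat \<Rightarrow> nat. strict_mono r \<and> (\<forall>k. N k \<le> r k)"
proof (intro exI conjI allI)
  show "strict_mono (\<lambda>k. (\<Sum>i\<le>k. N i) + k)"
    unfolding strict_mono_Suc_iff by simp
  show "N k \<le> (\<Sum>i\<le>k. N i) + k" for k
    using member_le_sum[of k "{..k}" N] by simp
qed

lemma AE_eventually_not_in_if_emeasure_le_geometric:
  assumes "\<And>k. C k \<in> sets M" "\<And>k. emeasure M (C k) \<le> ennreal ((1/2)^k)"
  shows "AE \<omega> in M. eventually (\<lambda>k. \<omega> \<notin> C k) sequentially"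
proof -
  have finite: "emeasure M (C k) < \<infinity>" for k
    using assms(2)[of k] by (metis ennreal_less_top infinity_ennreal_def le_less_trans)
  have measure_le: "measure M (C k) \<le> (1/2)^k" for k
    unfolding measure_def by (rule enn2real_leI) (simp_all add: assms(2))
  have "summable (\<lambda>k. measure M (C k))"
    by (rule summable_comparison_test'[OF summable_geometric[of "1/2::real"]]) (simp_all add: measure_le)
  from borel_cantelli_AE1[OF assms(1) finite this] show ?thesis
    by (auto elim: eventually_mono)
qed

lemma AE_tendsto_subseq_if_locally_tendsto_in_measure:
  fixes f :: "nat \<Rightarrow> 'a \<Rightarrow> ennreal"
  assumes "sigma_finite_measure M" "\<And>n. f n \<in> borel_measurable M"
    and "\<And>E t. E \<in> sets M \<Longrightarrow> emeasure M E < \<infinity> \<Longrightarrow> 0 < t \<Longrightarrow>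
      (\<lambda>n. emeasure M ({\<omega> \<in> space M. ennreal t \<le> f n \<omega>} \<inter> E)) \<longlonglongrightarrow> 0"
  shows "\<exists>r. strict_mono r \<and> (AE \<omega> in M. (\<lambda>k. f (r k) \<omega>) \<longlonglongrightarrow> 0)"
proof -
  obtain E where E: "range E \<subseteq> sets M" "(\<Union>i. E i) = space M" "\<And>i. emeasure M (E i) \<noteq> \<infinity>" "incseq E"
    using sigma_finite_measure.sigma_finite_incseq[OF assms(1)] by metis
  define B where "B k n = {\<omega> \<in> space M. ennreal ((1/2)^k) \<le> f n \<omega>} \<inter> E k" for k n
  have B: "B k n \<in> sets M" for k n
    using E(1) assms(2)[of n] unfolding B_def by auto
  have "eventually (\<lambda>n. emeasure M (B k n) < ennreal ((1/2)^k)) sequentially" for k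
    using order_tendstoD(2)[OF assms(3)[of "E k" "(1/2)^k"]] E(1,3) by (simp add: B_def less_top)
  then obtain N where N: "\<And>k n. N k \<le> n \<Longrightarrow> emeasure M (B k n) < ennreal ((1/2)^k)"
    unfolding eventually_sequentially by metis
  obtain r where r: "strict_mono r" "\<And>k. N k \<le> r k"
    using strict_mono_dominating by blast
  have "AE \<omega> in M. eventually (\<lambda>k. \<omega> \<notin> B k (r k)) sequentially"
    using B N r(2) by (intro AE_eventually_not_in_if_emeasure_le_geometric) (auto intro: less_imp_le)
  then have "AE \<omega> in M. (\<lambda>k. f (r k) \<omega>) \<longlonglongrightarrow> 0"
  proof (rule AE_mp, intro AE_I2 impI)
    fix \<omega> assume "\<omega> \<in> space M" and outside: "eventually (\<lambda>k. \<omega> \<notin> B k (r k)) sequentially"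
    then obtain j where "\<omega> \<in> E j"
      using E(2) by auto
    then have "eventually (\<lambda>k. \<omega> \<in> E k) sequentially"
      unfolding eventually_sequentially using E(4) by (auto simp: incseq_def)
    with outside have upper: "eventually (\<lambda>k. f (r k) \<omega> \<le> ennreal ((1/2)^k)) sequentially"
      by eventually_elim (use \<open>\<omega> \<in> space M\<close> in \<open>auto simp: B_def not_le intro: less_imp_le\<close>)
    have geometric: "(\<lambda>k. ennreal ((1/2)^k)) \<longlonglongrightarrow> ennreal 0"
      by (intro tendsto_ennrealI LIMSEQ_power_zero) simp
    show "(\<lambda>k. f (r k) \<omega>) \<longlonglongrightarrow> 0"
      by (rule tendsto_sandwich[OF _ upper tendsto_const geometric[unfolded ennreal_0]]) simp
  qed
  with r show ?thesis
    by blast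
qed

theorem proposition3p13:
  fixes M :: "'a measure" and \<rho> :: "('a \<Rightarrow> ennreal) \<Rightarrow> ennreal"
    and q :: "'b::real_vector \<Rightarrow> real"
    and xs :: "nat \<Rightarrow> 'a \<Rightarrow> 'b" and x :: "'a \<Rightarrow> 'b"
  assumes "sigma_finite_measure M"
    and "function_quasi_norm M \<rho>"
    and "quasi_banach q"
    and "\<forall>n. xs n \<in> M \<rightarrow>\<^sub>M qborel q"
    and "x \<in> M \<rightarrow>\<^sub>M qborel q"
    and "\<forall>n. (\<lambda>\<omega>. ennreal (q (xs n \<omega> - x \<omega>))) \<in> borel_measurable M"
    and "(\<lambda>n. \<rho> (\<lambda>\<omega>. ennreal (q (xs n \<omega> - x \<omega>)))) \<longlonglongrightarrow> 0"
  shows "\<exists>r. strict_mono r \<and> (AE \<omega> in M. (\<lambda>n. q (xs (r n) \<omega> - x \<omega>)) \<longlonglongrightarrow> 0)"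
proof -
  define f where "f n = (\<lambda>\<omega>. ennreal (q (xs n \<omega> - x \<omega>)))" for n
  have f: "f n \<in> borel_measurable M" for n
    using assms(6) unfolding f_def by blast
  have "(\<lambda>n. \<rho> (f n)) \<longlonglongrightarrow> 0"
    using assms(7) unfolding f_def .
  then have "(\<lambda>n. emeasure M ({\<omega> \<in> space M. ennreal t \<le> f n \<omega>} \<inter> E)) \<longlonglongrightarrow> 0"
    if "E \<in> sets M" "emeasure M E < \<infinity>" "0 < t" for E t
    using function_quasi_norm_tendsto_in_measure[of M \<rho> f, OF assms(2) f] that by blast
  then obtain r where "strict_mono r" and r: "AE \<omega> in M. (\<lambda>n. f (r n) \<omega>) \<longlonglongrightarrow> 0"
    using AE_tendsto_subseq_if_locally_tendsto_in_measure[of M f, OF assms(1) f] by blast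
  have "0 \<le> q y" for y
    using assms(3) unfolding quasi_banach_def quasi_norm_def by simp
  then have "AE \<omega> in M. (\<lambda>n. q (xs (r n) \<omega> - x \<omega>)) \<longlonglongrightarrow> 0"
    using r by (simp add: f_def ennreal_tendsto_0_iff)
  with \<open>strict_mono r\<close> show ?thesis
    by blast
qed

end
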